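(* Let $n\ge 5$ and let $\sigma$ be a maximal simplex of $\Delta_n$ that covers all places, and suppose $|N(w)\cap\sigma|\ge 2$ for all $w\in\sigma$. If there exists $v\in\sigma$ with $|N(v)\cap\sigma|\ge 3$, then $N(v)\subseteq\sigma$.
   Context: $\mathbb{I}_n$ is the $n$-dimensional hypercube graph on vertex set $\{0,1\}^n$ (adjacent iff differing in exactly one coordinate), with Hamming distance $d(v,w)=\#\{i: v(i)\ne w(i)\}$, $v(i)$ the $i$-th coordinate. $\Delta_n=\mathcal{VR}(\mathbb{I}_n;3)$ is the simplicial complex whose simplices are the subsets $\sigma\subseteq\{0,1\}^n$ with $d(x,y)\le 3$ for all $x,y\in\sigma$. A simplex $\sigma$ covers all places if for each $i\in[n]=\{1,\dots,n\}$ there are $v,w\in\sigma$ with $v(i)=1$ and $w(i)=0$. $N(v)$ denotes the set of the $n$ vertices adjacent to $v$ in $\mathbb{I}_n$. *)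

theory Defs
  imports Main
begin

text \<open>A vertex of the hypercube I_n, an element of {0,1}^n, is represented by the set of
coordinates in [n] = {1..n} at which it equals 1.  So the vertex set is Pow {1..n}.\<close>

definition cube_vertices :: "nat \<Rightarrow> nat set set" where
  "cube_vertices n = Pow {1..n}"

definition hdist :: "nat set \<Rightarrow> nat set \<Rightarrow> nat" where
  "hdist v w = card ((v - w) \<union> (w - v))"

text \<open>Simplices of Delta_n = VR(I_n; 3): nonempty (finite) sets of vertices with pairwise
distance at most 3.\<close>
definition is_simplex :: "nat \<Rightarrow> nat set set \<Rightarrow> bool" where
  "is_simplex n \<sigma> \<longleftrightarrow> \<sigma> \<noteq> {} \<and> \<sigma> \<subseteq> cube_vertices n \<and>
     (\<forall>x\<in>\<sigma>. \<forall>y\<in>\<sigma>. hdist x y \<le> 3)"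

definition is_maximal_simplex :: "nat \<Rightarrow> nat set set \<Rightarrow> bool" where
  "is_maximal_simplex n \<sigma> \<longleftrightarrow> is_simplex n \<sigma> \<and>
     (\<forall>\<tau>. is_simplex n \<tau> \<and> \<sigma> \<subseteq> \<tau> \<longrightarrow> \<tau> = \<sigma>)"

definition covers_all_places :: "nat \<Rightarrow> nat set set \<Rightarrow> bool" where
  "covers_all_places n \<sigma> \<longleftrightarrow>
     (\<forall>i\<in>{1..n}. \<exists>v\<in>\<sigma>. \<exists>w\<in>\<sigma>. i \<in> v \<and> i \<notin> w)"

definition nbhd :: "nat \<Rightarrow> nat set \<Rightarrow> nat set set" where
  "nbhd n v = {w \<in> cube_vertices n. hdist v w = 1}"

end

theory Submission
  imports Defs
begin

text \<open>Translating by \<open>v\<close>, i.e. \<open>z \<mapsto> sym_diff v z\<close>, is an isometry of the cube sending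
\<open>v\<close> to \<open>{}\<close> and its neighbours to singletons \<open>{c}\<close>. A member of the translated simplex
at distance 3 from \<open>{}\<close> lies within distance 3 of three singletons \<open>{c\<^sub>1}, {c\<^sub>2}, {c\<^sub>3}\<close>,
so it is \<open>C = {c\<^sub>1, c\<^sub>2, c\<^sub>3}\<close>. A neighbour \<open>{i}\<close> of \<open>{}\<close> can be at distance 4 only
from \<open>C\<close>, and only if \<open>i \<notin> C\<close>. Since the simplex covers place \<open>i\<close>, some member \<open>Y\<close>
contains \<open>i\<close>; then \<open>Y \<noteq> C\<close>, so \<open>Y = {i, p}\<close> with \<open>p \<in> C\<close>, and the only possible
neighbour of \<open>Y\<close> in the simplex is \<open>{p}\<close>, contradicting that every vertex has two.
Thus every neighbour of \<open>v\<close> is within distance 3 of the simplex, which by maximality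
contains it.\<close>

lemma hdist_commute: "hdist a b = hdist b a"
  unfolding hdist_def by (simp add: Un_commute)

lemma hdist_self [simp]: "hdist a a = 0"
  unfolding hdist_def by simp

lemma hdist_empty_left [simp]: "hdist {} X = card X"
  unfolding hdist_def by simp

lemma sym_diff_sym_diff_left [simp]: "sym_diff v (sym_diff v a) = a"
  by auto

lemma hdist_sym_diff_left [simp]: "hdist (sym_diff v a) (sym_diff v b) = hdist a b"
  unfolding hdist_def by (rule arg_cong[where f = card]) auto

lemma hdist_eq_1_singletonE:
  assumes "hdist v u = 1"
  obtains i where "sym_diff v u = {i}"
  using assms unfolding hdist_def by (auto simp: card_1_singleton_iff)

lemma mem_if_hdist_singleton_le:
  assumes "3 \<le> card Z" "hdist Z {c} \<le> 3"
  shows "c \<in> Z"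
proof (rule ccontr)
  assume "c \<notin> Z"
  then have "sym_diff Z {c} = insert c Z" by auto
  with assms \<open>c \<notin> Z\<close> show False
    unfolding hdist_def by (simp add: card_insert_if card_ge_0_finite)
qed

lemma near_triple_pairE:
  assumes "finite Z" "card Z \<le> 2" "i \<in> Z" "i \<notin> T" "card T = 3" "hdist Z T \<le> 3"
  obtains p where "p \<in> T" "Z = {i, p}"
proof -
  have "finite T" using assms(5) by (metis card.infinite zero_neq_numeral)
  have "insert i (T - Z) \<subseteq> sym_diff Z T" using assms(3,4) by auto
  then have "card (insert i (T - Z)) \<le> 3"
    using assms(1,6) \<open>finite T\<close> unfolding hdist_def by (meson card_mono finite_Diff finite_UnI le_trans)
  then have "card (T - Z) < card T"
    using \<open>finite T\<close> assms(4,5) by simp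
  then obtain p where p: "p \<in> T" "p \<in> Z"
    by (metis Diff_disjoint Diff_triv less_irrefl disjoint_iff)
  then have "i \<noteq> p" using assms(4) by auto
  have "{i, p} = Z"
    by (rule card_seteq) (use assms(1,2,3) p \<open>i \<noteq> p\<close> in auto)
  then show ?thesis using p that by blast
qed

lemma far_member_unique:
  assumes near: "\<forall>X\<in>S. \<forall>Y\<in>S. hdist X Y \<le> 3" and "{} \<in> S"
    and three_nbrs: "3 \<le> card {Z \<in> S. hdist {} Z = 1}"
    and "X \<in> S" "Y \<in> S" "3 \<le> card X" "3 \<le> card Y"
  shows "X = Y"
proof -
  obtain N where "N \<subseteq> {Z \<in> S. hdist {} Z = 1}" "card N = 3"
    using obtain_subset_with_card_n[OF three_nbrs] by blast
  then obtain Z1 Z2 Z3 where Z: "Z1 \<in> S" "Z2 \<in> S" "Z3 \<in> S" "card Z1 = 1" "card Z2 = 1" "card Z3 = 1"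
      "Z1 \<noteq> Z2" "Z1 \<noteq> Z3" "Z2 \<noteq> Z3"
    by (auto simp: card_3_iff)
  then obtain c1 c2 c3 where c: "Z1 = {c1}" "Z2 = {c2}" "Z3 = {c3}"
    by (meson card_1_singletonE)
  have "W = {c1, c2, c3}" if "W \<in> S" "3 \<le> card W" for W
  proof (rule card_seteq[symmetric])
    show "finite W" using \<open>3 \<le> card W\<close> by (simp add: card_ge_0_finite)
    show "{c1, c2, c3} \<subseteq> W"
      using mem_if_hdist_singleton_le[OF \<open>3 \<le> card W\<close>] near that(1) Z(1-3) c by auto
    have "card W \<le> 3"
      using near that(1) \<open>{} \<in> S\<close> by (metis hdist_empty_left)
    then show "card W \<le> card {c1, c2, c3}"
      using Z(7-9) c by simp
  qed
  then show ?thesis using assms(4-7) by metis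
qed

lemma hdist_pair_pair_ne_1:
  assumes "i \<noteq> p" "i \<noteq> q"
  shows "hdist {i, p} {i, q} \<noteq> 1"
proof (cases "p = q")
  case False
  then have "sym_diff {i, p} {i, q} = {p, q}" using assms by auto
  then show ?thesis using False unfolding hdist_def by simp
qed (simp add: hdist_def)

lemma hdist_singleton_le_if_far_unique:
  assumes near: "\<forall>X\<in>S. \<forall>Y\<in>S. hdist X Y \<le> 3" and fin: "\<forall>X\<in>S. finite X" and "{} \<in> S"
    and far_unique: "\<forall>X\<in>S. \<forall>Y\<in>S. 3 \<le> card X \<longrightarrow> 3 \<le> card Y \<longrightarrow> X = Y"
    and two_nbrs: "\<forall>Y\<in>S. 2 \<le> card {Z \<in> S. hdist Y Z = 1}"
    and "Y \<in> S" "i \<in> Y" "X \<in> S"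
  shows "hdist {i} X \<le> 3"
proof (rule ccontr)
  assume far_from_i: "\<not> hdist {i} X \<le> 3"
  have small: "card W \<le> 3" if "W \<in> S" for W
    using near that \<open>{} \<in> S\<close> by (metis hdist_empty_left)
  have "i \<notin> X"
  proof
    assume "i \<in> X"
    then have "sym_diff {i} X = X - {i}" by auto
    then show False
      using far_from_i small[OF \<open>X \<in> S\<close>] unfolding hdist_def
      by (metis card_Diff1_le le_trans)
  qed
  then have "sym_diff {i} X = insert i X" by auto
  then have "card X = 3"
    using far_from_i small[OF \<open>X \<in> S\<close>] fin \<open>X \<in> S\<close> \<open>i \<notin> X\<close> unfolding hdist_def by simp
  have pair: "\<exists>q\<in>X. W = {i, q}" if "W \<in> S" "i \<in> W" for W
  proof -
    have "card W \<le> 2"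
    proof (rule ccontr)
      assume "\<not> card W \<le> 2"
      then have "W = X" using far_unique that(1) \<open>X \<in> S\<close> \<open>card X = 3\<close> by simp
      then show False using that(2) \<open>i \<notin> X\<close> by simp
    qed
    then show ?thesis
      using near_triple_pairE[of W i X] fin near that \<open>X \<in> S\<close> \<open>i \<notin> X\<close> \<open>card X = 3\<close>
      by blast
  qed
  obtain p where "p \<in> X" and Y: "Y = {i, p}" using pair \<open>Y \<in> S\<close> \<open>i \<in> Y\<close> by blast
  then have "i \<noteq> p" using \<open>i \<notin> X\<close> by blast
  have "{Z \<in> S. hdist Y Z = 1} \<subseteq> {{p}}"
  proof clarify
    fix Z assume "Z \<in> S" "hdist Y Z = 1"
    show "Z = {p}"
    proof (cases "i \<in> Z")
      case True
      then obtain q where "q \<in> X" and Z: "Z = {i, q}" using pair \<open>Z \<in> S\<close> by blast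
      then have "i \<noteq> q" using \<open>i \<notin> X\<close> by blast
      then have False
        using hdist_pair_pair_ne_1[OF \<open>i \<noteq> p\<close>] \<open>hdist Y Z = 1\<close> Y Z by blast
      then show ?thesis ..
    next
      case False
      then have "i \<in> sym_diff Y Z" using Y by auto
      with \<open>hdist Y Z = 1\<close> have "sym_diff Y Z = {i}"
        unfolding hdist_def by (metis card_1_singletonE singletonD)
      then have "Z = sym_diff Y {i}" by (metis sym_diff_sym_diff_left)
      then show ?thesis using Y \<open>i \<noteq> p\<close> by auto
    qed
  qed
  then have "card {Z \<in> S. hdist Y Z = 1} \<le> 1"
    using card_mono[of "{{p}}"] by fastforce
  moreover have "2 \<le> card {Z \<in> S. hdist Y Z = 1}" using two_nbrs \<open>Y \<in> S\<close> by blast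
  ultimately show False by linarith
qed

lemma mem_maximal_simplex_if_near:
  assumes "is_maximal_simplex n \<sigma>" "u \<in> cube_vertices n" "\<forall>x\<in>\<sigma>. hdist u x \<le> 3"
  shows "u \<in> \<sigma>"
proof -
  have "is_simplex n (insert u \<sigma>)"
    using assms hdist_commute unfolding is_maximal_simplex_def is_simplex_def by auto
  then show ?thesis using assms(1) unfolding is_maximal_simplex_def by blast
qed

lemma translated_simplex:
  assumes "is_simplex n \<sigma>" "v \<in> \<sigma>"
  shows "\<forall>X\<in>sym_diff v ` \<sigma>. \<forall>Y\<in>sym_diff v ` \<sigma>. hdist X Y \<le> 3"
    and "\<forall>X\<in>sym_diff v ` \<sigma>. finite X"
    and "{} \<in> sym_diff v ` \<sigma>"
proof -
  have "\<forall>x\<in>\<sigma>. finite x"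
    using assms(1) finite_subset unfolding is_simplex_def cube_vertices_def by blast
  then show "\<forall>X\<in>sym_diff v ` \<sigma>. finite X" using assms(2) by blast
  show "\<forall>X\<in>sym_diff v ` \<sigma>. \<forall>Y\<in>sym_diff v ` \<sigma>. hdist X Y \<le> 3"
    using assms(1) unfolding is_simplex_def by auto
  show "{} \<in> sym_diff v ` \<sigma>"
    using assms(2) by (intro image_eqI[where x = v]) auto
qed

lemma card_neighbours_translated:
  assumes "\<sigma> \<subseteq> cube_vertices n"
  shows "card {Z \<in> sym_diff v ` \<sigma>. hdist (sym_diff v y) Z = 1} = card (nbhd n y \<inter> \<sigma>)"
proof -
  have "{Z \<in> sym_diff v ` \<sigma>. hdist (sym_diff v y) Z = 1} = sym_diff v ` (nbhd n y \<inter> \<sigma>)"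
  proof (intro equalityI subsetI)
    fix Z assume "Z \<in> {Z \<in> sym_diff v ` \<sigma>. hdist (sym_diff v y) Z = 1}"
    then obtain z where "z \<in> \<sigma>" "Z = sym_diff v z" "hdist y z = 1" by auto
    then show "Z \<in> sym_diff v ` (nbhd n y \<inter> \<sigma>)" using assms unfolding nbhd_def by blast
  qed (auto simp: nbhd_def)
  moreover have "inj_on (sym_diff v) (nbhd n y \<inter> \<sigma>)"
    by (rule inj_on_inverseI[where g = "sym_diff v"]) (rule sym_diff_sym_diff_left)
  ultimately show ?thesis by (simp only: card_image)
qed

lemma covers_all_places_sym_diffE:
  assumes "covers_all_places n \<sigma>" "i \<in> {1..n}"
  obtains y where "y \<in> \<sigma>" "i \<in> sym_diff v y"
proof -
  obtain y1 y2 where "y1 \<in> \<sigma>" "y2 \<in> \<sigma>" "i \<in> y1" "i \<notin> y2"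
    using assms unfolding covers_all_places_def by blast
  then show ?thesis using that by (cases "i \<in> v") auto
qed

theorem mainTheorem10:
  fixes n :: nat and \<sigma> :: "nat set set" and v :: "nat set"
  assumes "n \<ge> 5"
    and "is_maximal_simplex n \<sigma>"
    and "covers_all_places n \<sigma>"
    and "\<forall>w\<in>\<sigma>. card (nbhd n w \<inter> \<sigma>) \<ge> 2"
    and "v \<in> \<sigma>"
    and "card (nbhd n v \<inter> \<sigma>) \<ge> 3"
  shows "nbhd n v \<subseteq> \<sigma>"
proof
  fix u assume u: "u \<in> nbhd n v"
  define S where "S = sym_diff v ` \<sigma>"
  have simplex: "is_simplex n \<sigma>" using assms(2) by (simp add: is_maximal_simplex_def)
  note S = translated_simplex[OF simplex assms(5), folded S_def]
  have nbrs: "card {Z \<in> S. hdist (sym_diff v y) Z = 1} = card (nbhd n y \<inter> \<sigma>)" for y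
    using card_neighbours_translated simplex unfolding S_def is_simplex_def by blast
  have "3 \<le> card {Z \<in> S. hdist {} Z = 1}" using nbrs[of v] assms(6) by simp
  then have far_unique: "\<forall>X\<in>S. \<forall>Y\<in>S. 3 \<le> card X \<longrightarrow> 3 \<le> card Y \<longrightarrow> X = Y"
    using far_member_unique[OF S(1,3)] by blast
  have two_nbrs: "\<forall>Y\<in>S. 2 \<le> card {Z \<in> S. hdist Y Z = 1}"
    using nbrs[unfolded S_def] assms(4) unfolding S_def by simp
  obtain i where i: "sym_diff v u = {i}"
    using u hdist_eq_1_singletonE unfolding nbhd_def by blast
  have "i \<in> {1..n}"
    using i u simplex assms(5) unfolding nbhd_def is_simplex_def cube_vertices_def by blast
  then obtain y where "y \<in> \<sigma>" "i \<in> sym_diff v y"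
    using covers_all_places_sym_diffE assms(3) by blast
  then have "hdist {i} (sym_diff v x) \<le> 3" if "x \<in> \<sigma>" for x
    using hdist_singleton_le_if_far_unique[OF S(1,2,3) far_unique two_nbrs] that unfolding S_def by blast
  then have "\<forall>x\<in>\<sigma>. hdist u x \<le> 3" using i hdist_sym_diff_left by metis
  then show "u \<in> \<sigma>"
    using mem_maximal_simplex_if_near assms(2) u unfolding nbhd_def by blast
qed

end
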